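(* Let $P\subset\mathbb{R}^2$ be a closed PL disk equipped with the metric $d_P$, where $d_P(x,y)$ is the infimum of Euclidean lengths of PL arcs in $P$ joining $x$ and $y$. Let $T\subset P$ be a topological triod with endpoints $\{a,b,c\}$ and vertex $x$, and let $\alpha_{ab},\alpha_{bc},\alpha_{ac}$ denote the arcs in $T$ connecting the respective pairs of endpoints. Then at least one of $\alpha_{ab},\alpha_{bc},\alpha_{ac}$ is not a geodesic of $(P,d_P)$.
   Context: A triod is a space homeomorphic to $([-1,1]\times\{0\})\cup(\{0\}\times[0,1])$; its endpoints are the three points whose removal leaves it connected, and its vertex is the branch point. $(P,d_P)$ is a CAT(0) space; a geodesic is an arc whose length equals the $d_P$-distance between its endpoints. *)

theory Defs
  imports "HOL-Analysis.Analysis"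
begin

fun pl_path :: "'a::real_normed_vector list \<Rightarrow> real \<Rightarrow> 'a" where
  "pl_path [] = linepath 0 0"
| "pl_path [p] = linepath p p"
| "pl_path [p, q] = linepath p q"
| "pl_path (p # q # r # ps) = linepath p q +++ pl_path (q # r # ps)"

definition pl_length :: "'a::real_normed_vector list \<Rightarrow> real" where
  "pl_length ps = (\<Sum>i < length ps - 1. dist (ps ! i) (ps ! Suc i))"

definition dP :: "'a::real_normed_vector set \<Rightarrow> 'a \<Rightarrow> 'a \<Rightarrow> real" where
  "dP P x y = (if x = y then 0 else
     Inf {pl_length ps | ps. ps \<noteq> [] \<and> hd ps = x \<and> last ps = y \<and>
                            arc (pl_path ps) \<and> path_image (pl_path ps) \<subseteq> P})"

definition pl_disk :: "(real^2) set \<Rightarrow> bool" where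
  "pl_disk P \<longleftrightarrow>
     (\<exists>\<T>. finite \<T> \<and> (\<forall>S\<in>\<T>. \<exists>u v w. S = convex hull {u, v, w}) \<and> P = \<Union>\<T>) \<and>
     P homeomorphic cball (0::real^2) 1"

definition curve_length :: "('a \<Rightarrow> 'a \<Rightarrow> real) \<Rightarrow> (real \<Rightarrow> 'a) \<Rightarrow> ereal" where
  "curve_length d g =
     (SUP nt \<in> {(n, t::nat \<Rightarrow> real). t 0 = 0 \<and> t n = 1 \<and> (\<forall>i<n. t i \<le> t (Suc i))}.
        ereal (\<Sum>i < fst nt. d (g (snd nt i)) (g (snd nt (Suc i)))))"

definition geodesic_in :: "(real^2) set \<Rightarrow> (real \<Rightarrow> real^2) \<Rightarrow> bool" where
  "geodesic_in P g \<longleftrightarrow> arc g \<and> path_image g \<subseteq> P \<and>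
     curve_length (dP P) g = ereal (dP P (pathstart g) (pathfinish g))"

definition standard_triod :: "(real^2) set" where
  "standard_triod = {vector [t, 0] | t. -1 \<le> t \<and> t \<le> 1} \<union> {vector [0, t] | t. 0 \<le> t \<and> t \<le> 1}"

definition triod :: "(real^2) set \<Rightarrow> bool" where
  "triod T \<longleftrightarrow> T homeomorphic standard_triod"

definition triod_endpoints :: "(real^2) set \<Rightarrow> (real^2) set" where
  "triod_endpoints T = {p \<in> T. connected (T - {p})}"

definition triod_vertex :: "(real^2) set \<Rightarrow> real^2 \<Rightarrow> bool" where
  "triod_vertex T x \<longleftrightarrow> x \<in> T \<and> card (components (T - {x})) = 3"

end

theory Submission
  imports Defs
begin

text \<open>Suppose all three arcs were geodesics. Parametrize T by the standard triod; each arc joins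
  two ends, so it passes through the branch point v and, just before and just after, through
  the points at a small distance s on the two legs it uses. Near v the PL disk P is a cone with
  apex v (every triangle is), and since P is a disk the punctured cone is connected, so its
  directions form an arc of the circle. Hence two of the three leg points u, w are seen from v
  under an angle less than pi inside that arc, and the chord [u, w] lies in P and misses v.
  Since d_P dominates the Euclidean distance and |u - w| < |u - v| + |v - w|, the geodesic
  through u, v, w could be shortened along this chord, a contradiction.\<close>

fun pl_image :: "'a::real_normed_vector list \<Rightarrow> 'a set" where
  "pl_image [] = {}"
| "pl_image [p] = {p}"
| "pl_image (p # q # ps) = closed_segment p q \<union> pl_image (q # ps)"

fun pl_simple :: "'a::real_normed_vector list \<Rightarrow> bool" where
  "pl_simple [] = False"
| "pl_simple [p] = True"
| "pl_simple (p # q # ps) \<longleftrightarrow>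
     p \<noteq> q \<and> pl_simple (q # ps) \<and> closed_segment p q \<inter> pl_image (q # ps) \<subseteq> {q}"

lemma pl_length_Nil [simp]: "pl_length [] = 0"
  and pl_length_single [simp]: "pl_length [p] = 0"
  by (simp_all add: pl_length_def)

lemma pl_length_Cons2 [simp]: "pl_length (p # q # ps) = dist p q + pl_length (q # ps)"
proof -
  have "pl_length (p # q # ps) = (\<Sum>i < Suc (length ps). dist ((p # q # ps) ! i) ((p # q # ps) ! Suc i))"
    by (simp add: pl_length_def)
  also have "\<dots> = dist p q + (\<Sum>i < length ps. dist ((q # ps) ! i) ((q # ps) ! Suc i))"
    by (subst sum.lessThan_Suc_shift) simp
  finally show ?thesis by (simp add: pl_length_def)
qed

lemma pl_length_Cons: "qs \<noteq> [] \<Longrightarrow> pl_length (p # qs) = dist p (hd qs) + pl_length qs"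
  by (cases qs) auto

lemma pl_length_nonneg: "0 \<le> pl_length ps"
  by (induction ps rule: pl_image.induct) auto

lemma dist_le_pl_length: "ps \<noteq> [] \<Longrightarrow> dist (hd ps) (last ps) \<le> pl_length ps"
proof (induction ps rule: pl_image.induct)
  case (3 p q ps)
  then show ?case using dist_triangle[of p "last (q # ps)" q] by simp
qed auto

lemma pl_image_Cons: "qs \<noteq> [] \<Longrightarrow> pl_image (p # qs) = closed_segment p (hd qs) \<union> pl_image qs"
  by (cases qs) auto

lemma hd_in_pl_image: "ps \<noteq> [] \<Longrightarrow> hd ps \<in> pl_image ps"
  by (induction ps rule: pl_image.induct) auto

lemma pl_simple_Cons:
  "qs \<noteq> [] \<Longrightarrow> pl_simple (p # qs) \<longleftrightarrow>
     p \<noteq> hd qs \<and> pl_simple qs \<and> closed_segment p (hd qs) \<inter> pl_image qs \<subseteq> {hd qs}"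
  by (cases qs) auto

lemma pl_path_basic:
  assumes "ps \<noteq> []"
  shows "path (pl_path ps) \<and> pathstart (pl_path ps) = hd ps \<and> pathfinish (pl_path ps) = last ps
         \<and> path_image (pl_path ps) = pl_image ps"
  using assms by (induction ps rule: pl_path.induct) (auto simp: path_image_join)

lemma arc_pl_path:
  assumes "pl_simple ps" "2 \<le> length ps"
  shows "arc (pl_path ps)"
proof -
  obtain p q qs where ps: "ps = p # q # qs"
    using assms(2) by (cases ps rule: pl_image.cases) auto
  have "pl_simple (p # q # qs) \<Longrightarrow> arc (pl_path (p # q # qs))" for p q
  proof (induction qs arbitrary: p q)
    case Nil then show ?case by (simp add: arc_linepath)
  next
    case (Cons r qs)
    then show ?case
      using pl_path_basic[of "q # r # qs"] by (auto intro!: arc_join)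
  qed
  then show ?thesis using assms(1) ps by blast
qed

lemma pl_join:
  assumes "ps \<noteq> []" "qs \<noteq> []" "last ps = hd qs"
  shows "pl_image (ps @ tl qs) = pl_image ps \<union> pl_image qs"
    and "pl_length (ps @ tl qs) = pl_length ps + pl_length qs"
    and "hd (ps @ tl qs) = hd ps" "last (ps @ tl qs) = last qs" "ps @ tl qs \<noteq> []"
proof -
  have "pl_image (ps @ tl qs) = pl_image ps \<union> pl_image qs \<and>
        pl_length (ps @ tl qs) = pl_length ps + pl_length qs"
    using assms
  proof (induction ps rule: pl_image.induct)
    case (2 p)
    then show ?case using hd_in_pl_image[of qs] by (cases qs) auto
  next
    case (3 p q ps)
    then show ?case
      using pl_image_Cons[of "(q # ps) @ tl qs" p] pl_length_Cons[of "(q # ps) @ tl qs" p] by auto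
  qed simp
  then show "pl_image (ps @ tl qs) = pl_image ps \<union> pl_image qs"
    "pl_length (ps @ tl qs) = pl_length ps + pl_length qs" by simp_all
  show "hd (ps @ tl qs) = hd ps" "ps @ tl qs \<noteq> []" using assms(1) by simp_all
  show "last (ps @ tl qs) = last qs"
    using assms by (cases qs) (auto simp: last_append)
qed

lemma dist_split_segment:
  "(z::'a::euclidean_space) \<in> closed_segment a b \<Longrightarrow> dist a b = dist a z + dist z b"
  using between between_mem_segment by blast

lemma pl_simple_last_exit:
  fixes K :: "'a::euclidean_space set"
  assumes "pl_simple qs" "K \<inter> pl_image qs \<noteq> {}" "closed K"
  shows "\<exists>s ts. s \<in> K \<and> pl_simple ts \<and> ts \<noteq> [] \<and> hd ts = s \<and> last ts = last qs
     \<and> pl_image ts \<subseteq> pl_image qs \<and> pl_image ts \<inter> K = {s}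
     \<and> pl_length ts + dist (hd qs) s \<le> pl_length qs"
  using assms
proof (induction qs rule: pl_image.induct)
  case (2 p)
  then show ?case by (intro exI[of _ p] exI[of _ "[p]"]) auto
next
  case (3 q0 q1 rest)
  show ?case
  proof (cases "K \<inter> pl_image (q1 # rest) = {}")
    case False
    from "3.IH"[OF _ False \<open>closed K\<close>] "3.prems"(1)
    obtain s ts where "s \<in> K" "pl_simple ts" "ts \<noteq> []" "hd ts = s"
      "last ts = last (q1 # rest)" "pl_image ts \<subseteq> pl_image (q1 # rest)" "pl_image ts \<inter> K = {s}"
      "pl_length ts + dist q1 s \<le> pl_length (q1 # rest)" by auto
    then show ?thesis using dist_triangle[of q0 s q1] by (intro exI[of _ s] exI[of _ ts]) auto
  next
    case True
    let ?A = "K \<inter> closed_segment q0 q1"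
    have "?A \<noteq> {}" using True "3.prems"(2) by auto
    moreover have "closed ?A" using \<open>closed K\<close> by (simp add: closed_Int)
    ultimately obtain s where s: "s \<in> ?A" "\<And>y. y \<in> ?A \<Longrightarrow> dist q1 s \<le> dist q1 y"
      using distance_attains_inf by blast
    have "s \<noteq> q1" using s True hd_in_pl_image[of "q1 # rest"] by auto
    have sub: "closed_segment s q1 \<subseteq> closed_segment q0 q1"
      using s(1) by (simp add: subset_closed_segment)
    have "closed_segment s q1 \<inter> K \<subseteq> {s}"
    proof
      fix z assume z: "z \<in> closed_segment s q1 \<inter> K"
      then have "dist q1 s \<le> dist q1 z" using sub s(2) by blast
      moreover have "dist s q1 = dist s z + dist z q1" using z dist_split_segment by blast
      ultimately show "z \<in> {s}" by (simp add: dist_commute)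
    qed
    then have "pl_image (s # q1 # rest) \<inter> K = {s}" using True s by auto
    moreover have "pl_simple (s # q1 # rest)" using \<open>s \<noteq> q1\<close> "3.prems"(1) sub by auto
    moreover have "dist q0 q1 = dist q0 s + dist s q1" using s(1) dist_split_segment by blast
    ultimately show ?thesis using s(1) sub
      by (intro exI[of _ s] exI[of _ "s # q1 # rest"]) auto
  qed
qed simp

lemma pl_simple_shortening:
  fixes ps :: "'a::euclidean_space list"
  assumes "ps \<noteq> []"
  shows "\<exists>qs. pl_simple qs \<and> qs \<noteq> [] \<and> hd qs = hd ps \<and> last qs = last ps
     \<and> pl_image qs \<subseteq> pl_image ps \<and> pl_length qs \<le> pl_length ps"
  using assms
proof (induction ps rule: pl_image.induct)
  case (2 p) then show ?case by (intro exI[of _ "[p]"]) auto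
next
  case (3 p q rest)
  obtain qs where qs: "pl_simple qs" "qs \<noteq> []" "hd qs = q" "last qs = last (q # rest)"
     "pl_image qs \<subseteq> pl_image (q # rest)" "pl_length qs \<le> pl_length (q # rest)"
    using "3.IH" by auto
  have "closed_segment p q \<inter> pl_image qs \<noteq> {}" using hd_in_pl_image[OF qs(2)] qs(3) by auto
  then obtain s ts where st: "s \<in> closed_segment p q" "pl_simple ts" "ts \<noteq> []" "hd ts = s"
      "last ts = last qs" "pl_image ts \<subseteq> pl_image qs" "pl_image ts \<inter> closed_segment p q = {s}"
      "pl_length ts + dist q s \<le> pl_length qs"
    using pl_simple_last_exit[OF qs(1), of "closed_segment p q"] qs(3) by auto
  show ?case
  proof (cases "s = p")
    case True
    have "pl_length ts \<le> pl_length (p # q # rest)"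
      using st qs zero_le_dist[of q s] zero_le_dist[of p q] by (simp, linarith)
    then show ?thesis using st qs True by (intro exI[of _ ts]) auto
  next
    case False
    have sub: "closed_segment p s \<subseteq> closed_segment p q"
      using st(1) by (simp add: subset_closed_segment)
    have "pl_simple (p # ts)" using pl_simple_Cons[OF st(3)] st False sub by auto
    moreover have "pl_image (p # ts) \<subseteq> pl_image (p # q # rest)"
      using pl_image_Cons[OF st(3), of p] st qs sub by auto
    moreover have "pl_length (p # ts) \<le> pl_length (p # q # rest)"
      using pl_length_Cons[OF st(3), of p] st qs dist_triangle[of p s q] by (auto simp: dist_commute)
    ultimately show ?thesis using st qs by (intro exI[of _ "p # ts"]) auto
  qed
qed simp

section \<open>The intrinsic metric of a polygonally connected set\<close>

definition pl_connected :: "'a::real_normed_vector set \<Rightarrow> bool" where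
  "pl_connected P \<longleftrightarrow>
     (\<forall>x\<in>P. \<forall>y\<in>P. \<exists>ps. ps \<noteq> [] \<and> hd ps = x \<and> last ps = y \<and> pl_image ps \<subseteq> P)"

abbreviation pl_arc_lengths :: "'a::real_normed_vector set \<Rightarrow> 'a \<Rightarrow> 'a \<Rightarrow> real set" where
  "pl_arc_lengths P x y \<equiv> {pl_length ps | ps. ps \<noteq> [] \<and> hd ps = x \<and> last ps = y \<and>
     arc (pl_path ps) \<and> path_image (pl_path ps) \<subseteq> P}"

lemma pl_arc_length_le:
  fixes ps :: "'a::euclidean_space list"
  assumes "ps \<noteq> []" "hd ps = x" "last ps = y" "pl_image ps \<subseteq> P" "x \<noteq> y"
  shows "\<exists>l\<in>pl_arc_lengths P x y. l \<le> pl_length ps"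
proof -
  obtain qs where qs: "pl_simple qs" "qs \<noteq> []" "hd qs = x" "last qs = y"
      "pl_image qs \<subseteq> pl_image ps" "pl_length qs \<le> pl_length ps"
    using pl_simple_shortening[OF assms(1)] assms by auto
  have "2 \<le> length qs"
    using qs(2-4) assms(5) by (cases qs rule: pl_image.cases) auto
  then have "arc (pl_path qs)" using arc_pl_path qs(1) by blast
  moreover have "path_image (pl_path qs) \<subseteq> P" using pl_path_basic[OF qs(2)] qs(5) assms(4) by auto
  ultimately show ?thesis using qs by blast
qed

lemma dP_le_pl_length:
  fixes ps :: "'a::euclidean_space list"
  assumes "ps \<noteq> []" "hd ps = x" "last ps = y" "pl_image ps \<subseteq> P"
  shows "dP P x y \<le> pl_length ps"
proof (cases "x = y")
  case False
  then obtain l where "l \<in> pl_arc_lengths P x y" "l \<le> pl_length ps"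
    using pl_arc_length_le[OF assms] by blast
  moreover have "bdd_below (pl_arc_lengths P x y)"
    by (rule bdd_belowI[of _ 0]) (auto simp: pl_length_nonneg)
  ultimately have "Inf (pl_arc_lengths P x y) \<le> pl_length ps"
    using cInf_lower[of l "pl_arc_lengths P x y"] by linarith
  then show ?thesis using False by (simp add: dP_def)
qed (simp add: dP_def pl_length_nonneg)

lemma dP_le_dist:
  fixes u v :: "'a::euclidean_space"
  assumes "closed_segment u v \<subseteq> P"
  shows "dP P u v \<le> dist u v"
  using dP_le_pl_length[of "[u, v]" u v P] assms by auto

lemma pl_arc_lengths_nonempty:
  fixes x y :: "'a::euclidean_space"
  assumes "pl_connected P" "x \<in> P" "y \<in> P" "x \<noteq> y"
  shows "pl_arc_lengths P x y \<noteq> {}"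
proof -
  obtain ps where "ps \<noteq> []" "hd ps = x" "last ps = y" "pl_image ps \<subseteq> P"
    using assms unfolding pl_connected_def by blast
  then show ?thesis using pl_arc_length_le[of ps x y P] assms(4) by blast
qed

lemma dist_le_dP:
  fixes x y :: "'a::euclidean_space"
  assumes "pl_connected P" "x \<in> P" "y \<in> P"
  shows "dist x y \<le> dP P x y"
proof (cases "x = y")
  case False
  have "dist x y \<le> Inf (pl_arc_lengths P x y)"
  proof (rule cInf_greatest[OF pl_arc_lengths_nonempty[OF assms False]])
    fix l assume "l \<in> pl_arc_lengths P x y"
    then show "dist x y \<le> l" using dist_le_pl_length by auto
  qed
  then show ?thesis using False by (simp add: dP_def)
qed (simp add: dP_def)

lemma dP_approx:
  fixes x y :: "'a::euclidean_space"
  assumes "pl_connected P" "x \<in> P" "y \<in> P" "e > 0"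
  obtains ps where "ps \<noteq> []" "hd ps = x" "last ps = y" "pl_image ps \<subseteq> P"
    "pl_length ps < dP P x y + e"
proof (cases "x = y")
  case True
  then show ?thesis using that[of "[x]"] assms by (simp add: dP_def)
next
  case False
  obtain l where "l \<in> pl_arc_lengths P x y" "l < Inf (pl_arc_lengths P x y) + e"
    using cInf_lessD[OF pl_arc_lengths_nonempty[OF assms(1-3) False],
        of "Inf (pl_arc_lengths P x y) + e"] assms(4) by auto
  then obtain ps where "ps \<noteq> []" "hd ps = x" "last ps = y" "path_image (pl_path ps) \<subseteq> P"
    "pl_length ps < dP P x y + e" using False unfolding dP_def by auto
  then show ?thesis using that pl_path_basic by metis
qed

lemma dP_triangle:
  fixes x y z :: "'a::euclidean_space"
  assumes "pl_connected P" "x \<in> P" "y \<in> P" "z \<in> P"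
  shows "dP P x z \<le> dP P x y + dP P y z"
proof (rule field_le_epsilon)
  fix e :: real assume "0 < e"
  obtain ps where ps: "ps \<noteq> []" "hd ps = x" "last ps = y" "pl_image ps \<subseteq> P"
      "pl_length ps < dP P x y + e/2"
    using dP_approx[OF assms(1-3), of "e/2"] \<open>0 < e\<close> by auto
  obtain qs where qs: "qs \<noteq> []" "hd qs = y" "last qs = z" "pl_image qs \<subseteq> P"
      "pl_length qs < dP P y z + e/2"
    using dP_approx[OF assms(1,3,4), of "e/2"] \<open>0 < e\<close> by auto
  have "dP P x z \<le> pl_length (ps @ tl qs)"
    using dP_le_pl_length[of "ps @ tl qs" x z P] pl_join[OF ps(1) qs(1)] ps qs by auto
  then show "dP P x z \<le> dP P x y + dP P y z + e"
    using pl_join[OF ps(1) qs(1)] ps qs by simp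
qed

lemma pl_connected_Union:
  fixes P :: "'a::euclidean_space set"
  assumes "finite \<T>" "\<And>S. S \<in> \<T> \<Longrightarrow> convex S \<and> closed S" "P = \<Union>\<T>" "connected P"
  shows "pl_connected P"
  unfolding pl_connected_def
proof (intro ballI)
  fix x y assume "x \<in> P" "y \<in> P"
  define A where "A = {y\<in>P. \<exists>ps. ps \<noteq> [] \<and> hd ps = x \<and> last ps = y \<and> pl_image ps \<subseteq> P}"
  have extend: "S \<subseteq> A" if S: "S \<in> \<T>" "S \<inter> A \<noteq> {}" for S
  proof
    fix z assume "z \<in> S"
    obtain w where "w \<in> S" "w \<in> A" using S(2) by blast
    then obtain ps where w: "w \<in> S" "ps \<noteq> []" "hd ps = x" "last ps = w" "pl_image ps \<subseteq> P"
      unfolding A_def by blast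
    have "closed_segment w z \<subseteq> P"
      using assms(2,3) S(1) w(1) \<open>z \<in> S\<close> closed_segment_subset by blast
    then show "z \<in> A"
      using pl_join[of ps "[w, z]"] w \<open>z \<in> S\<close> S(1) assms(3) unfolding A_def
      by (intro CollectI conjI exI[of _ "ps @ tl [w, z]"]) auto
  qed
  have "A \<subseteq> P" unfolding A_def by blast
  then have A_Union: "A = \<Union>{S\<in>\<T>. S \<inter> A \<noteq> {}}"
    using extend assms(3) by blast
  define B where "B = \<Union>{S\<in>\<T>. S \<inter> A = {}}"
  have "closed (\<Union>{S\<in>\<T>. S \<inter> A \<noteq> {}})" "closed B"
    unfolding B_def by (rule closed_Union; use assms(1,2) in auto)+
  then have "closed A" "closed B" by (metis A_Union)+
  have cover: "P \<subseteq> A \<union> B" unfolding B_def using A_Union assms(3) by blast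
  have "A \<inter> B \<inter> P = {}" unfolding B_def by auto
  moreover have "A \<inter> P \<noteq> {}"
    unfolding A_def using \<open>x \<in> P\<close> by (auto intro!: exI[of _ "[x]"])
  ultimately have "B \<inter> P = {}"
    using \<open>connected P\<close> \<open>closed A\<close> \<open>closed B\<close> cover unfolding connected_closed by blast
  then have "y \<in> A" using \<open>y \<in> P\<close> cover by blast
  then show "\<exists>ps. ps \<noteq> [] \<and> hd ps = x \<and> last ps = y \<and> pl_image ps \<subseteq> P" unfolding A_def by auto
qed

lemma pl_disk_pl_connected:
  assumes "pl_disk P"
  shows "pl_connected P"
proof -
  obtain \<T> where \<T>: "finite \<T>" "\<forall>S\<in>\<T>. \<exists>u v w. S = convex hull {u, v, w}" "P = \<Union>\<T>"
    and "P homeomorphic cball (0::real^2) 1"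
    using assms unfolding pl_disk_def by blast
  then have "connected P" using homeomorphic_connectedness by fastforce
  moreover have "convex S \<and> closed S" if "S \<in> \<T>" for S
    using \<T>(2) that by (auto intro!: compact_imp_closed compact_convex_hull)
  ultimately show ?thesis using pl_connected_Union[OF \<T>(1) _ \<T>(3)] by blast
qed

section \<open>Geodesics admit no shortcuts\<close>

definition shortcut :: "'a::real_vector set \<Rightarrow> 'a \<Rightarrow> 'a \<Rightarrow> 'a \<Rightarrow> bool" where
  "shortcut P x0 u v \<longleftrightarrow> closed_segment u v \<subseteq> P \<and> x0 \<notin> closed_segment u v"

lemma curve_length_ge_four_points:
  assumes "0 \<le> t1" "t1 \<le> t0" "t0 \<le> t2" "t2 \<le> 1"
  shows "ereal (d (g 0) (g t1) + d (g t1) (g t0) + d (g t0) (g t2) + d (g t2) (g 1))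
    \<le> curve_length d g"
proof -
  define t :: "nat \<Rightarrow> real"
    where "t i = (if i = 0 then 0 else if i = 1 then t1 else if i = 2 then t0 else if i = 3 then t2 else 1)"
    for i
  have "t i \<le> t (Suc i)" if "i < 4" for i
  proof -
    have "i = 0 \<or> i = 1 \<or> i = 2 \<or> i = 3" using that by auto
    then show ?thesis using assms by (auto simp: t_def)
  qed
  then have partition: "(4, t) \<in> {(n, t::nat \<Rightarrow> real). t 0 = 0 \<and> t n = 1 \<and> (\<forall>i<n. t i \<le> t (Suc i))}"
    by (simp add: t_def)
  moreover have "(\<Sum>i < 4. d (g (t i)) (g (t (Suc i)))) =
      d (g 0) (g t1) + d (g t1) (g t0) + d (g t0) (g t2) + d (g t2) (g 1)"
    by (simp add: t_def eval_nat_numeral)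
  ultimately show ?thesis
    unfolding curve_length_def
    using SUP_upper[OF partition, of "\<lambda>nt. ereal (\<Sum>i < fst nt. d (g (snd nt i)) (g (snd nt (Suc i))))"]
    by simp
qed

lemma geodesic_no_shortcut:
  assumes "pl_connected P" "geodesic_in P g"
    and "0 \<le> t1" "t1 \<le> t0" "t0 \<le> t2" "t2 \<le> 1"
  shows "\<not> shortcut P (g t0) (g t1) (g t2)"
proof
  assume "shortcut P (g t0) (g t1) (g t2)"
  then have seg: "closed_segment (g t1) (g t2) \<subseteq> P" and off: "g t0 \<notin> closed_segment (g t1) (g t2)"
    by (simp_all add: shortcut_def)
  have inP: "g s \<in> P" if "0 \<le> s" "s \<le> 1" for s
    using assms(2) that unfolding geodesic_in_def path_image_def by auto
  let ?d = "dP P"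
  have "?d (g 0) (g t1) + ?d (g t1) (g t0) + ?d (g t0) (g t2) + ?d (g t2) (g 1) \<le> ?d (g 0) (g 1)"
    using curve_length_ge_four_points[OF assms(3-6), of ?d g] assms(2)
    by (simp add: geodesic_in_def pathstart_def pathfinish_def)
  moreover have "?d (g 0) (g 1) \<le> ?d (g 0) (g t1) + ?d (g t1) (g 1)"
    "?d (g t1) (g 1) \<le> ?d (g t1) (g t2) + ?d (g t2) (g 1)"
    using assms(3-6) by (intro dP_triangle[OF assms(1)] inP; simp)+
  moreover have "?d (g t1) (g t2) \<le> dist (g t1) (g t2)" using dP_le_dist[OF seg] .
  moreover have "dist (g t1) (g t2) \<noteq> dist (g t1) (g t0) + dist (g t0) (g t2)"
    using off between between_mem_segment by blast
  moreover have "dist (g t1) (g t2) \<le> dist (g t1) (g t0) + dist (g t0) (g t2)"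
    by (rule dist_triangle)
  moreover have "dist (g t1) (g t0) \<le> ?d (g t1) (g t0)" "dist (g t0) (g t2) \<le> ?d (g t0) (g t2)"
    using dist_le_dP[OF assms(1)] inP assms(3-6) by auto
  ultimately show False by linarith
qed

section \<open>Local conical structure of PL disks\<close>

definition radial_within :: "'a::real_normed_vector set \<Rightarrow> 'a \<Rightarrow> real \<Rightarrow> bool" where
  "radial_within S x0 r \<longleftrightarrow>
     (\<forall>y\<in>S \<inter> ball x0 r. \<forall>t\<ge>0. x0 + t *\<^sub>R (y - x0) \<in> ball x0 r \<longrightarrow> x0 + t *\<^sub>R (y - x0) \<in> S)"

lemma radial_within_smaller:
  "radial_within S x0 r \<Longrightarrow> r' \<le> r \<Longrightarrow> radial_within S x0 r'"
proof -
  assume "radial_within S x0 r" "r' \<le> r"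
  moreover have "ball x0 r' \<subseteq> ball x0 r" using \<open>r' \<le> r\<close> by (rule subset_ball)
  ultimately show ?thesis unfolding radial_within_def by blast
qed

lemma radial_within_Inter:
  "(\<And>S. S \<in> F \<Longrightarrow> radial_within S x0 r) \<Longrightarrow> radial_within (\<Inter>F) x0 r"
  unfolding radial_within_def by blast

lemma radial_within_Union:
  "(\<And>S. S \<in> F \<Longrightarrow> radial_within S x0 r) \<Longrightarrow> radial_within (\<Union>F) x0 r"
  unfolding radial_within_def by blast

lemma radial_within_finite_common:
  assumes "finite F" "\<And>S. S \<in> F \<Longrightarrow> \<exists>r>0. radial_within S x0 r"
  shows "\<exists>r>0. \<forall>S\<in>F. radial_within S x0 r"
  using assms
proof (induction F rule: finite_induct)
  case (insert S F)
  then obtain r1 r2 where "r1 > 0" "\<forall>S\<in>F. radial_within S x0 r1" "r2 > 0" "radial_within S x0 r2"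
    by blast
  then show ?case
    by (intro exI[of _ "min r1 r2"]) (auto intro: radial_within_smaller)
qed (auto intro: exI[of _ 1])

lemma radial_within_interior:
  assumes "x0 \<in> interior S"
  shows "\<exists>r>0. radial_within S x0 r"
proof -
  obtain r where "r > 0" "ball x0 r \<subseteq> S" using assms mem_interior by blast
  then show ?thesis unfolding radial_within_def by blast
qed

lemma radial_within_closed_notin:
  assumes "closed S" "x0 \<notin> S"
  shows "\<exists>r>0. radial_within S x0 r"
proof -
  obtain r where "r > 0" "ball x0 r \<subseteq> - S"
    using assms open_contains_ball[of "- S"] by blast
  then show ?thesis unfolding radial_within_def by blast
qed

lemma radial_within_halfspace:
  assumes "a \<bullet> x0 \<le> b"
  shows "\<exists>r>0. radial_within {x. a \<bullet> x \<le> b} x0 r"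
proof (cases "a \<bullet> x0 = b")
  case True
  have "a \<bullet> (x0 + t *\<^sub>R (y - x0)) \<le> b" if "a \<bullet> y \<le> b" "0 \<le> t" for y t
  proof -
    have "a \<bullet> (x0 + t *\<^sub>R (y - x0)) = b + t * (a \<bullet> y - b)"
      using True by (simp add: inner_add_right inner_diff_right algebra_simps)
    then show ?thesis using that by (simp add: mult_nonneg_nonpos)
  qed
  then show ?thesis unfolding radial_within_def by (intro exI[of _ 1]) auto
next
  case False
  have "{x. a \<bullet> x < b} \<subseteq> interior {x. a \<bullet> x \<le> b}"
    by (rule interior_maximal) (auto simp: open_halfspace_lt)
  then have "x0 \<in> interior {x. a \<bullet> x \<le> b}" using assms False by auto
  then show ?thesis by (rule radial_within_interior)
qed

lemma radial_within_polyhedron: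
  fixes S :: "'a::euclidean_space set"
  assumes "polyhedron S"
  shows "\<exists>r>0. radial_within S x0 r"
proof (cases "x0 \<in> S")
  case True
  obtain F where F: "finite F" "S = \<Inter>F" "\<forall>h\<in>F. \<exists>a b. a \<noteq> 0 \<and> h = {x. a \<bullet> x \<le> b}"
    using assms unfolding polyhedron_def by blast
  have "\<exists>r>0. radial_within h x0 r" if h: "h \<in> F" for h
  proof -
    obtain a b where "h = {x. a \<bullet> x \<le> b}" using F(3) h by blast
    moreover have "x0 \<in> h" using True h unfolding F(2) by blast
    ultimately show ?thesis using radial_within_halfspace[of a x0 b] by simp
  qed
  then obtain r where "r > 0" "\<forall>h\<in>F. radial_within h x0 r"
    using radial_within_finite_common[OF F(1)] by blast
  then show ?thesis using F(2) radial_within_Inter[of F x0] by auto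
next
  case False
  then show ?thesis using radial_within_closed_notin[OF polyhedron_imp_closed[OF assms]] by blast
qed

lemma pl_disk_radial_within:
  assumes "pl_disk P"
  shows "\<exists>r>0. radial_within P x0 r"
proof -
  obtain \<T> where \<T>: "finite \<T>" "\<forall>S\<in>\<T>. \<exists>u v w. S = convex hull {u, v, w}" "P = \<Union>\<T>"
    using assms unfolding pl_disk_def by blast
  have "polyhedron S" if "S \<in> \<T>" for S
  proof -
    obtain u v w where "S = convex hull {u, v, w}" using \<T>(2) \<open>S \<in> \<T>\<close> by blast
    then show ?thesis by (simp add: polytope_imp_polyhedron polytope_convex_hull)
  qed
  then obtain r where "r > 0" "\<forall>S\<in>\<T>. radial_within S x0 r"
    using radial_within_finite_common[OF \<T>(1)] radial_within_polyhedron by blast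
  then show ?thesis using radial_within_Union[of \<T> x0] \<T>(3) by auto
qed

definition local_cone :: "'a::real_normed_vector set \<Rightarrow> 'a \<Rightarrow> real \<Rightarrow> 'a set" where
  "local_cone P x0 r = {c. \<exists>t>0. x0 + t *\<^sub>R c \<in> P \<inter> ball x0 r}"

lemma cone_local_cone:
  assumes "x0 \<in> P" "0 < r"
  shows "cone (local_cone P x0 r)"
  unfolding cone_def
proof (intro ballI allI impI)
  fix c and l :: real assume "c \<in> local_cone P x0 r" "0 \<le> l"
  then obtain t where "t > 0" "x0 + t *\<^sub>R c \<in> P \<inter> ball x0 r" unfolding local_cone_def by blast
  show "l *\<^sub>R c \<in> local_cone P x0 r"
  proof (cases "l = 0")
    case True
    then show ?thesis using assms unfolding local_cone_def by (intro CollectI exI[of _ 1]) auto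
  next
    case False
    then have "x0 + (t / l) *\<^sub>R (l *\<^sub>R c) = x0 + t *\<^sub>R c" by simp
    then show ?thesis
      unfolding local_cone_def using \<open>t > 0\<close> \<open>0 \<le> l\<close> False \<open>x0 + t *\<^sub>R c \<in> P \<inter> ball x0 r\<close>
      by (intro CollectI exI[of _ "t / l"]) auto
  qed
qed

lemma diff_in_local_cone: "y \<in> P \<inter> ball x0 r \<Longrightarrow> y - x0 \<in> local_cone P x0 r"
  unfolding local_cone_def by (intro CollectI exI[of _ 1]) auto

lemma local_cone_in:
  assumes "radial_within P x0 r" "c \<in> local_cone P x0 r" "0 \<le> s" "norm (s *\<^sub>R c) < r"
  shows "x0 + s *\<^sub>R c \<in> P"
proof -
  obtain t where t: "t > 0" "x0 + t *\<^sub>R c \<in> P \<inter> ball x0 r" using assms(2) unfolding local_cone_def by blast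
  have "x0 + (s / t) *\<^sub>R ((x0 + t *\<^sub>R c) - x0) = x0 + s *\<^sub>R c" using t(1) by simp
  moreover have "x0 + s *\<^sub>R c \<in> ball x0 r" using assms(4) by (simp add: dist_norm)
  ultimately show ?thesis
    using assms(1) t assms(3) unfolding radial_within_def by (metis divide_nonneg_pos less_le)
qed

lemma connected_cone_punctured:
  fixes C :: "'a::real_normed_vector set"
  assumes "cone C" "connected M" "M \<subseteq> C - {0}" and rescale: "\<And>c. c \<in> C - {0} \<Longrightarrow> \<exists>s>0. s *\<^sub>R c \<in> M"
  shows "connected (C - {0})"
proof -
  have "C - {0} = (\<lambda>(t, m). t *\<^sub>R m) ` ({0<..} \<times> M)"
  proof
    show "(\<lambda>(t, m). t *\<^sub>R m) ` ({0<..} \<times> M) \<subseteq> C - {0}"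
      using mem_cone[OF \<open>cone C\<close>] \<open>M \<subseteq> C - {0}\<close> by fastforce
    show "C - {0} \<subseteq> (\<lambda>(t, m). t *\<^sub>R m) ` ({0<..} \<times> M)"
    proof
      fix c assume "c \<in> C - {0}"
      then obtain s where "s > 0" "s *\<^sub>R c \<in> M" using rescale by blast
      then have "(1 / s, s *\<^sub>R c) \<in> {0<..} \<times> M" "c = (\<lambda>(t, m). t *\<^sub>R m) (1 / s, s *\<^sub>R c)"
        by auto
      then show "c \<in> (\<lambda>(t, m). t *\<^sub>R m) ` ({0<..} \<times> M)" by blast
    qed
  qed
  moreover have "connected (({0<..} :: real set) \<times> M)" using \<open>connected M\<close> by (simp add: connected_Times)
  moreover have "continuous_on ({0<..} \<times> M) (\<lambda>(t, m). t *\<^sub>R m)"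
    by (auto intro!: continuous_intros simp: case_prod_unfold)
  ultimately show ?thesis by (metis connected_continuous_image)
qed

lemma connected_cball_Int_ball_punctured:
  fixes p :: "'a::euclidean_space"
  assumes "2 \<le> DIM('a)" "p \<in> cball a R" "0 < R" "0 < e"
  shows "connected (cball a R \<inter> ball p e - {p})"
proof (rule connected_punctured_convex)
  show "convex (cball a R \<inter> ball p e)" by (simp add: convex_Int)
  have "p \<in> closure (ball a R)" using assms(2,3) by simp
  then obtain y where "y \<in> ball a R" "dist y p < e" using assms(4) closure_approachable by blast
  moreover have "ball a R \<inter> ball p e \<subseteq> interior (cball a R \<inter> ball p e)"
    by (rule interior_maximal) auto
  ultimately have "interior (cball a R \<inter> ball p e) \<noteq> {}" by (auto simp: dist_commute)
  then show "aff_dim (cball a R \<inter> ball p e) \<noteq> 1"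
    using aff_dim_nonempty_interior assms(1) by fastforce
qed

lemma homeomorphic_disk_punctured_neighbourhood:
  fixes P :: "(real^2) set"
  assumes "P homeomorphic cball (0::real^2) 1" "x0 \<in> P" "0 < r"
  obtains N \<rho> where "0 < \<rho>" "P \<inter> ball x0 \<rho> \<subseteq> N" "N \<subseteq> P \<inter> ball x0 r" "connected (N - {x0})"
proof -
  have "cball (0::real^2) 1 homeomorphic P" using assms(1) homeomorphic_sym by blast
  then obtain h k where "homeomorphism (cball (0::real^2) 1) P h k"
    unfolding homeomorphic_def by blast
  then have h: "continuous_on (cball 0 1) h" "h ` cball 0 1 = P" "\<And>z. z \<in> cball 0 1 \<Longrightarrow> k (h z) = z"
    and k: "continuous_on P k" "k ` P = cball 0 1" "\<And>y. y \<in> P \<Longrightarrow> h (k y) = y"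
    unfolding homeomorphism_def by auto
  define p where "p = k x0"
  have p: "p \<in> cball 0 1" "h p = x0" using k assms(2) unfolding p_def by auto
  obtain e where "e > 0" and e: "\<And>z. z \<in> cball 0 1 \<Longrightarrow> dist z p < e \<Longrightarrow> dist (h z) x0 < r"
    using h(1) p assms(3) unfolding continuous_on_iff by metis
  obtain \<rho> where "\<rho> > 0" and \<rho>: "\<And>y. y \<in> P \<Longrightarrow> dist y x0 < \<rho> \<Longrightarrow> dist (k y) p < e"
    using k(1) assms(2) \<open>e > 0\<close> unfolding continuous_on_iff p_def by metis
  define B where "B = cball (0::real^2) 1 \<inter> ball p e"
  have cover: "P \<inter> ball x0 \<rho> \<subseteq> h ` B"
  proof
    fix y assume "y \<in> P \<inter> ball x0 \<rho>"
    then have "k y \<in> B" using \<rho> k(2) unfolding B_def by (auto simp: dist_commute)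
    then show "y \<in> h ` B" using k(3) \<open>y \<in> P \<inter> ball x0 \<rho>\<close> by (metis IntD1 image_eqI)
  qed
  moreover have inside: "h ` B \<subseteq> P \<inter> ball x0 r"
    using e h(2) unfolding B_def by (auto simp: dist_commute)
  moreover have "h ` B - {x0} = h ` (B - {p})"
  proof
    show "h ` B - {x0} \<subseteq> h ` (B - {p})" using p(2) by blast
    have "h z \<noteq> x0" if "z \<in> B - {p}" for z
      using h(3) that unfolding B_def p_def by force
    then show "h ` (B - {p}) \<subseteq> h ` B - {x0}" by blast
  qed
  moreover have "connected (h ` (B - {p}))"
    using connected_cball_Int_ball_punctured[of p 0 1 e] p(1) \<open>e > 0\<close>
    by (intro connected_continuous_image[OF continuous_on_subset[OF h(1)]]) (auto simp: B_def)
  ultimately show ?thesis using that[OF \<open>\<rho> > 0\<close> cover inside] by simp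
qed

lemma connected_local_cone:
  fixes P :: "(real^2) set"
  assumes "P homeomorphic cball (0::real^2) 1" "x0 \<in> P" "0 < r" "radial_within P x0 r"
  shows "connected (local_cone P x0 r - {0})"
proof -
  obtain N \<rho> where "0 < \<rho>" "P \<inter> ball x0 \<rho> \<subseteq> N" "N \<subseteq> P \<inter> ball x0 r" "connected (N - {x0})"
    by (rule homeomorphic_disk_punctured_neighbourhood[OF assms(1-3)])
  define M where "M = (\<lambda>y. y - x0) ` (N - {x0})"
  show ?thesis
  proof (rule connected_cone_punctured[OF cone_local_cone[OF assms(2,3)]])
    show "connected M"
      unfolding M_def using \<open>connected (N - {x0})\<close>
      by (rule connected_continuous_image[rotated]) (intro continuous_intros)
    show "M \<subseteq> local_cone P x0 r - {0}"
      using \<open>N \<subseteq> P \<inter> ball x0 r\<close> unfolding M_def by (auto intro: diff_in_local_cone)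
  next
    fix c assume c: "c \<in> local_cone P x0 r - {0}"
    define s where "s = min \<rho> r / (2 * norm c)"
    have "s > 0" using c \<open>0 < \<rho>\<close> \<open>0 < r\<close> unfolding s_def by simp
    have "norm (s *\<^sub>R c) = min \<rho> r / 2" using c \<open>0 < \<rho>\<close> \<open>0 < r\<close> unfolding s_def by simp
    then have "norm (s *\<^sub>R c) < r" "dist x0 (x0 + s *\<^sub>R c) < \<rho>"
      using \<open>0 < \<rho>\<close> \<open>0 < r\<close> by (simp_all add: dist_norm)
    then have "x0 + s *\<^sub>R c \<in> P \<inter> ball x0 \<rho>"
      using local_cone_in[OF assms(4), of c s] c \<open>s > 0\<close> by simp
    moreover have "x0 + s *\<^sub>R c \<noteq> x0" using \<open>s > 0\<close> c by simp
    ultimately have "s *\<^sub>R c \<in> M"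
      using \<open>P \<inter> ball x0 \<rho> \<subseteq> N\<close> unfolding M_def by (intro image_eqI[of _ _ "x0 + s *\<^sub>R c"]) auto
    then show "\<exists>s>0. s *\<^sub>R c \<in> M" using \<open>s > 0\<close> by blast
  qed
qed

section \<open>Three directions in a connected planar cone\<close>

lemma sin_Arg_diff_sign:
  assumes "a \<noteq> 0" "b \<noteq> 0"
  shows "0 \<le> sin (Arg b - Arg a) \<longleftrightarrow> 0 \<le> Im (cnj a * b)"
    and "0 < sin (Arg b - Arg a) \<longleftrightarrow> 0 < Im (cnj a * b)"
proof -
  have Im: "Im (cnj a * b) = cmod a * cmod b * sin (Arg b - Arg a)"
    using cos_Arg[OF assms(1)] sin_Arg[OF assms(1)] cos_Arg[OF assms(2)] sin_Arg[OF assms(2)]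
    by (simp add: sin_diff algebra_simps)
  have c: "0 < cmod a * cmod b" using assms by simp
  show "0 \<le> sin (Arg b - Arg a) \<longleftrightarrow> 0 \<le> Im (cnj a * b)"
    and "0 < sin (Arg b - Arg a) \<longleftrightarrow> 0 < Im (cnj a * b)"
    unfolding Im using mult_le_cancel_left_pos[OF c, of 0] mult_less_cancel_left_pos[OF c, of 0]
    by simp_all
qed

lemma sin_nonneg_cases:
  fixes x :: real
  assumes "-2*pi < x" "x < 2*pi" "0 \<le> sin x"
  shows "(0 \<le> x \<and> x \<le> pi) \<or> x \<le> -pi"
proof (rule ccontr)
  assume "\<not> ?thesis"
  then consider "pi < x" | "-pi < x \<and> x < 0" by linarith
  then show False
  proof cases
    case 1
    then have "0 < sin (x - pi)" using assms by (intro sin_gt_zero) auto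
    then show False using assms by (simp add: sin_diff)
  next
    case 2
    then have "0 < sin (-x)" by (intro sin_gt_zero) auto
    then show False using assms by simp
  qed
qed

lemma Arg_closed_segment:
  fixes p q z :: complex
  assumes "p \<noteq> 0" "q \<noteq> 0" "Arg p \<le> Arg q" "Arg q < Arg p + pi" "z \<in> closed_segment p q"
  shows "z \<noteq> 0 \<and> Arg p \<le> Arg z \<and> Arg z \<le> Arg q"
proof -
  obtain t where t: "0 \<le> t" "t \<le> 1" "z = (1 - t) *\<^sub>R p + t *\<^sub>R q"
    using assms(5) unfolding closed_segment_def by auto
  show ?thesis
  proof (cases "Arg p = Arg q")
    case True
    then obtain x where "0 < x" "q = of_real x * p" using Arg_eq_iff assms(1,2) by metis
    define m where "m = (1 - t) + t * x"
    have "z = of_real m * p" using t(3) \<open>q = of_real x * p\<close>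
      unfolding m_def by (simp add: scaleR_conv_of_real algebra_simps)
    moreover have "0 < m" unfolding m_def using t \<open>0 < x\<close>
      by (cases "t = 0") (auto intro!: add_nonneg_pos)
    ultimately show ?thesis using assms(1) True by (simp del: of_real_mult)
  next
    case False
    let ?\<alpha> = "Arg p" and ?\<beta> = "Arg q"
    have "0 < sin (?\<beta> - ?\<alpha>)" using False assms(3,4) by (intro sin_gt_zero) auto
    then have pq: "0 < Im (cnj p * q)" using sin_Arg_diff_sign(2)[OF assms(1,2)] by blast
    have "cnj p * z = (1 - t) *\<^sub>R (cnj p * p) + t *\<^sub>R (cnj p * q)"
      "cnj z * q = (1 - t) *\<^sub>R (cnj p * q) + t *\<^sub>R (cnj q * q)"
      unfolding t(3) by (simp_all add: algebra_simps scaleR_conv_of_real)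
    then have Im_pz: "Im (cnj p * z) = t * Im (cnj p * q)"
      and Im_zq: "Im (cnj z * q) = (1 - t) * Im (cnj p * q)"
      by (simp_all add: complex_mult_cnj)
    have "z \<noteq> 0"
      using Im_pz Im_zq pq by (cases "t = 0") auto
    let ?\<theta> = "Arg z"
    have "0 \<le> Im (cnj p * z)" "0 \<le> Im (cnj z * q)"
      unfolding Im_pz Im_zq using t pq by simp_all
    then have "0 \<le> sin (?\<theta> - ?\<alpha>)" "0 \<le> sin (?\<beta> - ?\<theta>)"
      using sin_Arg_diff_sign(1) assms(1,2) \<open>z \<noteq> 0\<close> by blast+
    moreover have "-pi < ?\<alpha>" "?\<alpha> \<le> pi" "-pi < ?\<beta>" "?\<beta> \<le> pi" "-pi < ?\<theta>" "?\<theta> \<le> pi"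
      using Arg_bounded by blast+
    ultimately have "(0 \<le> ?\<theta> - ?\<alpha> \<and> ?\<theta> - ?\<alpha> \<le> pi) \<or> ?\<theta> - ?\<alpha> \<le> -pi"
      "(0 \<le> ?\<beta> - ?\<theta> \<and> ?\<beta> - ?\<theta> \<le> pi) \<or> ?\<beta> - ?\<theta> \<le> -pi"
      by (intro sin_nonneg_cases; linarith)+
    then show ?thesis using \<open>z \<noteq> 0\<close> False assms(3,4) by linarith
  qed
qed

lemma shortcut_linear_image:
  assumes "linear f" "inj f"
  shows "shortcut (f ` C) 0 (f p) (f q) \<longleftrightarrow> shortcut C 0 p q"
proof -
  have "closed_segment (f p) (f q) = f ` closed_segment p q"
    using closed_segment_linear_image[OF assms(1)] by simp
  moreover have "0 \<in> f ` S \<longleftrightarrow> 0 \<in> S" for S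
    using inj_image_mem_iff[OF assms(2), of 0 S] linear_0[OF assms(1)] by simp
  ultimately show ?thesis
    unfolding shortcut_def by (simp add: inj_image_subset_iff[OF assms(2)])
qed

lemma cone_linear_image:
  assumes "linear f" "cone C"
  shows "cone (f ` C)"
  unfolding cone_def
proof (intro ballI allI impI)
  fix y and c :: real assume "y \<in> f ` C" "0 \<le> c"
  then obtain x where "x \<in> C" "y = f x" by blast
  then have "c *\<^sub>R y = f (c *\<^sub>R x)" using linear_cmul[OF assms(1)] by simp
  moreover have "c *\<^sub>R x \<in> C" using mem_cone[OF assms(2) \<open>x \<in> C\<close> \<open>0 \<le> c\<close>] .
  ultimately show "c *\<^sub>R y \<in> f ` C" by blast
qed

lemma connected_linear_image_punctured:
  fixes f :: "'a::euclidean_space \<Rightarrow> 'b::real_normed_vector"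
  assumes "linear f" "inj f" "connected (C - {0})"
  shows "connected (f ` C - {0})"
proof -
  have "f x = 0 \<longleftrightarrow> x = 0" for x
    using inj_eq[OF assms(2), of x 0] linear_0[OF assms(1)] by simp
  then have "f ` C - {0} = f ` (C - {0})" by auto
  then show ?thesis using connected_linear_image[OF assms(1,3)] by simp
qed

lemma opposite_if_zero_in_closed_segment:
  fixes a b :: "'a::real_vector"
  assumes "0 \<in> closed_segment a b" "a \<noteq> 0" "b \<noteq> 0"
  obtains s where "s > 0" "a = (- s) *\<^sub>R b"
proof -
  obtain t where t: "0 \<le> t" "t \<le> 1" "(1 - t) *\<^sub>R a + t *\<^sub>R b = 0"
    using assms(1) unfolding closed_segment_def by auto
  then have "t \<noteq> 0" "t \<noteq> 1" using assms(2,3) by auto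
  have "(1 - t) *\<^sub>R a = (- t) *\<^sub>R b" using t(3) by (simp add: eq_neg_iff_add_eq_0 add.commute)
  have "a = (1 / (1 - t)) *\<^sub>R ((1 - t) *\<^sub>R a)" using \<open>t \<noteq> 1\<close> by simp
  also have "\<dots> = (- (t / (1 - t))) *\<^sub>R b" unfolding \<open>(1 - t) *\<^sub>R a = (- t) *\<^sub>R b\<close> by simp
  finally have "a = (- (t / (1 - t))) *\<^sub>R b" .
  moreover have "0 < t / (1 - t)" using t \<open>t \<noteq> 0\<close> \<open>t \<noteq> 1\<close> by simp
  ultimately show ?thesis using that by blast
qed

lemma not_pairwise_opposite:
  fixes u v w :: "'a::real_vector"
  assumes "u \<noteq> 0" "v \<noteq> 0" "w \<noteq> 0"
    and "0 \<in> closed_segment u v" "0 \<in> closed_segment v w" "0 \<in> closed_segment u w"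
  shows False
proof -
  obtain s1 where "s1 > 0" "u = (- s1) *\<^sub>R v"
    using opposite_if_zero_in_closed_segment assms(1,2,4) by blast
  obtain s2 where "s2 > 0" "v = (- s2) *\<^sub>R w"
    using opposite_if_zero_in_closed_segment assms(2,3,5) by blast
  obtain s3 where "s3 > 0" "u = (- s3) *\<^sub>R w"
    using opposite_if_zero_in_closed_segment assms(1,3,6) by blast
  have "(s1 * s2) *\<^sub>R w = (- s3) *\<^sub>R w"
    using \<open>u = (- s1) *\<^sub>R v\<close> \<open>v = (- s2) *\<^sub>R w\<close> \<open>u = (- s3) *\<^sub>R w\<close> by simp
  then have "(s1 * s2 + s3) *\<^sub>R w = 0" by (simp add: algebra_simps)
  moreover have "s1 * s2 + s3 > 0" using \<open>s1 > 0\<close> \<open>s2 > 0\<close> \<open>s3 > 0\<close> by (simp add: add_pos_pos)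
  ultimately show False using assms(3) by simp
qed

lemma shortcut_commute: "shortcut P x0 u v \<longleftrightarrow> shortcut P x0 v u"
  by (simp add: shortcut_def closed_segment_commute)

lemma complex_cone_shortcut_slit:
  fixes C :: "complex set"
  assumes "cone C" "connected (C - {0})" "C \<inter> \<real>\<^sub>\<le>\<^sub>0 \<subseteq> {0}"
    and "p \<in> C - {0}" "q \<in> C - {0}" "\<bar>Arg p - Arg q\<bar> < pi"
  shows "shortcut C 0 p q"
proof -
  have "continuous_on (C - {0}) Arg"
    using assms(3) by (intro continuous_at_imp_continuous_on ballI continuous_at_Arg) auto
  then have Arg_interval: "is_interval (Arg ` (C - {0}))"
    using connected_continuous_image assms(2) is_interval_connected_1 by blast
  have ordered: "shortcut C 0 p q"
    if pq: "p \<in> C - {0}" "q \<in> C - {0}" "Arg p \<le> Arg q" "Arg q < Arg p + pi" for p q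
  proof -
    have "z \<in> C \<and> z \<noteq> 0" if z: "z \<in> closed_segment p q" for z
    proof -
      have z0: "z \<noteq> 0" and "Arg p \<le> Arg z" "Arg z \<le> Arg q"
        using Arg_closed_segment[of p q z] pq z by auto
      then have "Arg z \<in> Arg ` (C - {0})"
        using Arg_interval pq(1,2) unfolding is_interval_1 by blast
      then obtain c where c: "c \<in> C - {0}" "Arg z = Arg c" by blast
      then obtain x where "0 < x" "z = of_real x * c" using Arg_eq_iff[of z c] z0 by blast
      then show ?thesis
        using mem_cone[OF assms(1), of c x] c z0 by (simp add: scaleR_conv_of_real)
    qed
    then show ?thesis unfolding shortcut_def by blast
  qed
  show ?thesis
  proof (cases "Arg p \<le> Arg q")
    case True
    then show ?thesis using ordered[of p q] assms(4-6) by simp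
  next
    case False
    then show ?thesis using ordered[of q p] assms(4-6) shortcut_commute[of C 0 p q] by simp
  qed
qed

lemma rotated_cone_avoids_nonpos_Reals:
  fixes C :: "complex set"
  assumes "cone C" "g \<notin> C" "g \<noteq> 0"
  shows "(*) (- inverse g) ` C \<inter> \<real>\<^sub>\<le>\<^sub>0 \<subseteq> {0}"
proof
  fix y assume "y \<in> (*) (- inverse g) ` C \<inter> \<real>\<^sub>\<le>\<^sub>0"
  then obtain c s where "c \<in> C" "y = - inverse g * c" "y = of_real s" "s \<le> 0"
    by (auto elim!: nonpos_Reals_cases)
  moreover have "s = 0"
  proof (rule ccontr)
    assume "s \<noteq> 0"
    then have "g = (1 / - s) *\<^sub>R c"
      using \<open>y = - inverse g * c\<close> \<open>y = of_real s\<close> \<open>g \<noteq> 0\<close>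
      by (auto simp: scaleR_conv_of_real field_simps)
    then show False using mem_cone[OF assms(1) \<open>c \<in> C\<close>, of "1 / - s"] \<open>s \<le> 0\<close> assms(2) by simp
  qed
  ultimately show "y \<in> {0}" by simp
qed

lemma complex_cone_shortcut:
  fixes C :: "complex set"
  assumes "cone C" "connected (C - {0})" "u \<in> C - {0}" "v \<in> C - {0}" "w \<in> C - {0}"
  shows "shortcut C 0 u v \<or> shortcut C 0 v w \<or> shortcut C 0 u w"
proof (cases "C = UNIV")
  case True
  then show ?thesis using not_pairwise_opposite[of u v w] assms(3-5) unfolding shortcut_def by blast
next
  case False
  then obtain g where "g \<notin> C" by blast
  then have "g \<noteq> 0" using cone_contains_0 assms(1,3) by blast
  define \<omega> where "\<omega> = - inverse g"
  have "\<omega> \<noteq> 0" using \<open>g \<noteq> 0\<close> unfolding \<omega>_def by simp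
  txt \<open>Rotating by \<omega> moves the missing direction g onto the negative real axis.\<close>
  have slit: "(*) \<omega> ` C \<inter> \<real>\<^sub>\<le>\<^sub>0 \<subseteq> {0}"
    unfolding \<omega>_def using rotated_cone_avoids_nonpos_Reals assms(1) \<open>g \<notin> C\<close> \<open>g \<noteq> 0\<close> .
  have pair: "shortcut C 0 a b"
    if "a \<in> C - {0}" "b \<in> C - {0}" "\<bar>Arg (\<omega> * a) - Arg (\<omega> * b)\<bar> < pi" for a b
  proof -
    have "shortcut ((*) \<omega> ` C) 0 (\<omega> * a) (\<omega> * b)"
      using that \<open>\<omega> \<noteq> 0\<close> slit cone_linear_image[OF linear_times assms(1)]
        connected_linear_image_punctured[OF linear_times _ assms(2)]
      by (intro complex_cone_shortcut_slit) auto
    then show ?thesis using shortcut_linear_image[of "(*) \<omega>"] \<open>\<omega> \<noteq> 0\<close> by simp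
  qed
  have bounds: "-pi < Arg (\<omega> * a) \<and> Arg (\<omega> * a) < pi" if "a \<in> C - {0}" for a
  proof -
    have "\<omega> * a \<notin> \<real>\<^sub>\<le>\<^sub>0" using slit that \<open>\<omega> \<noteq> 0\<close> by auto
    then show ?thesis using Arg_bounded[of "\<omega> * a"] Arg_eq_pi_iff[of "\<omega> * a"]
      by (auto simp: complex_nonpos_Reals_iff complex_is_Real_iff)
  qed
  have "\<bar>Arg (\<omega> * u) - Arg (\<omega> * v)\<bar> < pi \<or> \<bar>Arg (\<omega> * v) - Arg (\<omega> * w)\<bar> < pi
      \<or> \<bar>Arg (\<omega> * u) - Arg (\<omega> * w)\<bar> < pi"
    using bounds[OF assms(3)] bounds[OF assms(4)] bounds[OF assms(5)] by (smt (verit))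
  then show ?thesis using pair assms(3-5) by blast
qed

definition complex_of_vec2 :: "real^2 \<Rightarrow> complex" where
  "complex_of_vec2 v = Complex (v$1) (v$2)"

lemma linear_complex_of_vec2: "linear complex_of_vec2"
  by (rule linearI) (simp_all add: complex_of_vec2_def complex_eq_iff)

lemma inj_complex_of_vec2: "inj complex_of_vec2"
  by (rule injI) (simp add: complex_of_vec2_def complex_eq_iff vec_eq_iff forall_2)

lemma cone_shortcut_among_three:
  fixes C :: "(real^2) set"
  assumes "cone C" "connected (C - {0})" "u \<in> C - {0}" "v \<in> C - {0}" "w \<in> C - {0}"
  shows "shortcut C 0 u v \<or> shortcut C 0 v w \<or> shortcut C 0 u w"
proof -
  let ?f = complex_of_vec2
  have "?f x \<in> ?f ` C - {0}" if "x \<in> C - {0}" for x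
    using that linear_0[OF linear_complex_of_vec2] inj_eq[OF inj_complex_of_vec2, of x 0] by auto
  then have "shortcut (?f ` C) 0 (?f u) (?f v) \<or> shortcut (?f ` C) 0 (?f v) (?f w)
      \<or> shortcut (?f ` C) 0 (?f u) (?f w)"
    using assms by (intro complex_cone_shortcut cone_linear_image connected_linear_image_punctured
        linear_complex_of_vec2 inj_complex_of_vec2) auto
  then show ?thesis
    using shortcut_linear_image[OF linear_complex_of_vec2 inj_complex_of_vec2] by blast
qed

lemma shortcut_from_local_cone:
  assumes "radial_within P x0 r" "u \<in> ball x0 r" "v \<in> ball x0 r"
    and "shortcut (local_cone P x0 r) 0 (u - x0) (v - x0)"
  shows "shortcut P x0 u v"
proof -
  have seg: "closed_segment u v = (\<lambda>z. x0 + z) ` closed_segment (u - x0) (v - x0)"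
    using closed_segment_translation[of x0 "u - x0" "v - x0"] by simp
  have "z \<in> P" if z: "z \<in> closed_segment u v" for z
  proof -
    have "z - x0 \<in> local_cone P x0 r" using z seg assms(4) unfolding shortcut_def by auto
    moreover have "z \<in> ball x0 r"
      using z assms(2,3) convex_ball closed_segment_subset by blast
    ultimately show ?thesis
      using local_cone_in[OF assms(1), of "z - x0" 1] by (simp add: dist_norm norm_minus_commute)
  qed
  moreover have "x0 \<notin> closed_segment u v" using seg assms(4) unfolding shortcut_def by force
  ultimately show ?thesis unfolding shortcut_def by blast
qed

lemma pl_disk_local_shortcut:
  assumes "pl_disk P" "x0 \<in> P"
  obtains r where "r > 0"
    "\<And>u v w. u \<in> P \<inter> ball x0 r - {x0} \<Longrightarrow> v \<in> P \<inter> ball x0 r - {x0} \<Longrightarrow>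
       w \<in> P \<inter> ball x0 r - {x0} \<Longrightarrow> shortcut P x0 u v \<or> shortcut P x0 v w \<or> shortcut P x0 u w"
proof -
  obtain r where "r > 0" and radial: "radial_within P x0 r"
    using pl_disk_radial_within[OF assms(1)] by blast
  let ?C = "local_cone P x0 r"
  have "P homeomorphic cball (0::real^2) 1" using assms(1) unfolding pl_disk_def by blast
  then have "cone ?C" "connected (?C - {0})"
    using cone_local_cone[OF assms(2) \<open>r > 0\<close>] connected_local_cone assms(2) radial \<open>r > 0\<close> by auto
  moreover have "y - x0 \<in> ?C - {0}" if "y \<in> P \<inter> ball x0 r - {x0}" for y
    using diff_in_local_cone[of y P x0 r] that by auto
  ultimately show ?thesis
    using that[OF \<open>r > 0\<close>] cone_shortcut_among_three shortcut_from_local_cone[OF radial]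
    by (metis DiffD1 IntD2)
qed

section \<open>The standard triod\<close>

definition triod_end :: "nat \<Rightarrow> real^2" where
  "triod_end i = (if i = 0 then vector [-1, 0] else if i = 1 then vector [1, 0] else vector [0, 1])"

text \<open>Chosen so that triod_coord i is the distance from 0 on the leg through triod_end i and
  minus that distance on the other two legs.\<close>
definition triod_coord :: "nat \<Rightarrow> real^2 \<Rightarrow> real" where
  "triod_coord i z = (if i = 0 then - z$1 - z$2 else if i = 1 then z$1 - z$2 else z$2 - \<bar>z$1\<bar>)"

lemma less_3_cases: "(i::nat) < 3 \<Longrightarrow> i = 0 \<or> i = 1 \<or> i = 2"
  by auto

lemma vector_eq_triod_end: "(vector [a, b] = t *\<^sub>R triod_end i) \<longleftrightarrow>
    (if i = 0 then a = - t \<and> b = 0 else if i = 1 then a = t \<and> b = 0 else a = 0 \<and> b = t)"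
  by (auto simp: triod_end_def vec_eq_iff forall_2)

lemma mem_standard_triod:
  "z \<in> standard_triod \<longleftrightarrow> (\<exists>j<3. \<exists>t\<in>{0..1}. z = t *\<^sub>R triod_end j)"
proof
  assume "z \<in> standard_triod"
  then obtain a b where z: "z = vector [a, b]"
    and ab: "(-1 \<le> a \<and> a \<le> 1 \<and> b = 0) \<or> (a = 0 \<and> 0 \<le> b \<and> b \<le> 1)"
    unfolding standard_triod_def by blast
  consider "a < 0" "b = 0" | "0 \<le> a" "b = 0" | "a = 0" "b \<noteq> 0" using ab by linarith
  then show "\<exists>j<3. \<exists>t\<in>{0..1}. z = t *\<^sub>R triod_end j"
  proof cases
    case 1
    then show ?thesis using z ab vector_eq_triod_end[of a 0 "- a" 0]
      by (intro exI[of _ 0] conjI bexI[of _ "- a"]) auto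
  next
    case 2
    then show ?thesis using z ab by (intro exI[of _ 1] conjI bexI[of _ a]) (auto simp: vector_eq_triod_end)
  next
    case 3
    then show ?thesis using z ab by (intro exI[of _ 2] conjI bexI[of _ b]) (auto simp: vector_eq_triod_end)
  qed
next
  assume "\<exists>j<3. \<exists>t\<in>{0..1}. z = t *\<^sub>R triod_end j"
  then obtain j t where j: "j < 3" and t: "0 \<le> t" "t \<le> 1" and z: "z = t *\<^sub>R triod_end j" by auto
  consider "z = vector [- t, 0]" "j = 0" | "z = vector [t, 0]" "j = 1" | "z = vector [0, t]" "j = 2"
    using less_3_cases[OF j] z vector_eq_triod_end[of _ _ t j] by metis
  then show "z \<in> standard_triod"
    unfolding standard_triod_def using t by cases force+
qed

lemma triod_end_in_standard_triod: "i < 3 \<Longrightarrow> triod_end i \<in> standard_triod"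
  unfolding mem_standard_triod by (intro exI[of _ i] conjI bexI[of _ 1]) auto

lemma zero_in_standard_triod: "0 \<in> standard_triod"
  unfolding mem_standard_triod by (intro exI[of _ 0] conjI bexI[of _ 0]) auto

lemma norm_triod_end [simp]: "norm (triod_end i) = 1"
  by (simp add: triod_end_def norm_vec_def L2_set_def sum_2)

lemma triod_end_nonzero [simp]: "triod_end i \<noteq> 0"
  using norm_triod_end[of i] by force

lemma triod_end_inj: "i < 3 \<Longrightarrow> j < 3 \<Longrightarrow> triod_end i = triod_end j \<Longrightarrow> i = j"
  by (auto dest!: less_3_cases simp: triod_end_def vec_eq_iff forall_2)

lemma scaleR_triod_end_eq_triod_end:
  assumes "0 \<le> t" "i < 3" "j < 3" "t *\<^sub>R triod_end j = triod_end i"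
  shows "t = 1 \<and> j = i"
proof -
  have "t = 1" using arg_cong[OF assms(4), of norm] assms(1) by simp
  then show ?thesis using triod_end_inj assms by simp
qed

lemma triod_coord_leg:
  "0 \<le> t \<Longrightarrow> i < 3 \<Longrightarrow> j < 3 \<Longrightarrow> triod_coord i (t *\<^sub>R triod_end j) = (if i = j then t else - t)"
  by (auto dest!: less_3_cases simp: triod_coord_def triod_end_def)

lemma continuous_on_triod_coord: "continuous_on A (triod_coord i)"
  unfolding triod_coord_def by (cases "i = 0"; cases "i = 1") (auto intro!: continuous_intros)

lemma triod_coord_eq_0:
  assumes "i < 3" "z \<in> standard_triod" "triod_coord i z = 0"
  shows "z = 0"
  using assms triod_coord_leg by (auto simp: mem_standard_triod split: if_splits)

lemma triod_coord_eq_pos: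
  assumes "i < 3" "z \<in> standard_triod" "0 < s" "triod_coord i z = s"
  shows "z = s *\<^sub>R triod_end i"
  using assms triod_coord_leg by (auto simp: mem_standard_triod split: if_splits)

lemma connected_standard_triod_minus_end:
  assumes "i < 3"
  shows "connected (standard_triod - {triod_end i})"
proof -
  define I where "I j = (if j = i then {0..<1} else {0..1::real})" for j
  have "z \<in> standard_triod - {triod_end i} \<longleftrightarrow> (\<exists>j<3. \<exists>t\<in>I j. z = t *\<^sub>R triod_end j)" for z
  proof
    assume z: "z \<in> standard_triod - {triod_end i}"
    then obtain j t where "j < 3" "t \<in> {0..1}" "z = t *\<^sub>R triod_end j"
      using mem_standard_triod by blast
    moreover have "z \<noteq> triod_end i" using z by blast
    ultimately show "\<exists>j<3. \<exists>t\<in>I j. z = t *\<^sub>R triod_end j"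
      by (intro exI[of _ j] conjI bexI[of _ t]) (auto simp: I_def less_le)
  next
    assume "\<exists>j<3. \<exists>t\<in>I j. z = t *\<^sub>R triod_end j"
    then obtain j t where "j < 3" "t \<in> I j" and z: "z = t *\<^sub>R triod_end j" by blast
    moreover have "I j \<subseteq> {0..1}" unfolding I_def by auto
    ultimately have "z \<in> standard_triod" using mem_standard_triod by blast
    moreover have "z \<noteq> triod_end i"
      using scaleR_triod_end_eq_triod_end[OF _ assms, of t j] \<open>t \<in> I j\<close> \<open>j < 3\<close> z
      unfolding I_def by (auto split: if_splits)
    ultimately show "z \<in> standard_triod - {triod_end i}" by blast
  qed
  then have "standard_triod - {triod_end i} = (\<Union>j<3. (\<lambda>t. t *\<^sub>R triod_end j) ` I j)" by blast
  moreover have "connected (\<Union>j<3. (\<lambda>t. t *\<^sub>R triod_end j) ` I j)"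
  proof (rule connected_Union)
    show "connected S" if "S \<in> (\<lambda>j. (\<lambda>t. t *\<^sub>R triod_end j) ` I j) ` {..<3}" for S
      using that unfolding I_def by (auto intro!: connected_continuous_image continuous_intros)
    have "0 \<in> (\<lambda>t. t *\<^sub>R triod_end j) ` I j" for j
      unfolding I_def by (auto intro: image_eqI[of _ _ 0])
    then show "\<Inter>((\<lambda>j. (\<lambda>t. t *\<^sub>R triod_end j) ` I j) ` {..<3}) \<noteq> {}" by blast
  qed
  ultimately show ?thesis by simp
qed

lemma standard_triod_path_through_vertex:
  assumes "path \<gamma>" "path_image \<gamma> \<subseteq> standard_triod" "\<gamma> 0 = triod_end i" "\<gamma> 1 = triod_end j"
    and "i < 3" "j < 3" "i \<noteq> j" "0 < s" "s \<le> 1"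
  obtains t1 t0 t2 where "0 \<le> t1" "t1 \<le> t0" "t0 \<le> t2" "t2 \<le> 1"
    "\<gamma> t1 = s *\<^sub>R triod_end i" "\<gamma> t0 = 0" "\<gamma> t2 = s *\<^sub>R triod_end j"
proof -
  have in_triod: "\<gamma> t \<in> standard_triod" if "0 \<le> t" "t \<le> 1" for t
    using assms(2) that unfolding path_image_def by auto
  have coord: "continuous_on {a..b} (\<lambda>t. triod_coord k (\<gamma> t))" if "0 \<le> a" "b \<le> 1" for k a b
    using continuous_on_subset[OF assms(1)[unfolded path_def]] that
    by (intro continuous_on_compose2[OF continuous_on_triod_coord]) auto
  have ends: "triod_coord k (\<gamma> 0) = (if k = i then 1 else -1)" "triod_coord k (\<gamma> 1) = (if k = j then 1 else -1)"
    if "k < 3" for k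
    using triod_coord_leg[of 1 k i] triod_coord_leg[of 1 k j] assms(3-6) that by simp_all
  obtain t0 where t0: "0 \<le> t0" "t0 \<le> 1" "triod_coord j (\<gamma> t0) = 0"
    using IVT'[of "\<lambda>t. triod_coord j (\<gamma> t)" 0 0 1] coord[of 0 1 j] ends[OF assms(6)] assms(7) by auto
  then have "\<gamma> t0 = 0" using triod_coord_eq_0[OF assms(6) in_triod] by blast
  then have "triod_coord k (\<gamma> t0) = 0" for k by (simp add: triod_coord_def)
  obtain t1 where t1: "0 \<le> t1" "t1 \<le> t0" "triod_coord i (\<gamma> t1) = s"
    using IVT2'[of "\<lambda>t. triod_coord i (\<gamma> t)" t0 s 0] coord[of 0 t0 i] ends[OF assms(5)] t0 assms(8,9)
      \<open>\<And>k. triod_coord k (\<gamma> t0) = 0\<close> by auto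
  obtain t2 where t2: "t0 \<le> t2" "t2 \<le> 1" "triod_coord j (\<gamma> t2) = s"
    using IVT'[of "\<lambda>t. triod_coord j (\<gamma> t)" t0 s 1] coord[of t0 1 j] ends[OF assms(6)] t0 assms(8,9)
      \<open>\<And>k. triod_coord k (\<gamma> t0) = 0\<close> by auto
  have "\<gamma> t1 = s *\<^sub>R triod_end i" "\<gamma> t2 = s *\<^sub>R triod_end j"
    using triod_coord_eq_pos[OF assms(5) in_triod assms(8) t1(3)] t1 t0
      triod_coord_eq_pos[OF assms(6) in_triod assms(8) t2(3)] t2 by auto
  then show ?thesis using that[OF t1(1,2) t2(1,2)] \<open>\<gamma> t0 = 0\<close> by blast
qed

lemma homeomorphism_image_Diff:
  assumes "homeomorphism S T h k" "x \<in> S"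
  shows "T - {h x} = h ` (S - {x})"
proof -
  have "inj_on h S" using homeomorphism_apply1[OF assms(1)] by (rule inj_on_inverseI)
  then have "h ` (S - {x}) = h ` S - h ` {x}" using assms(2) by (intro inj_on_image_set_diff) auto
  then show ?thesis using homeomorphism_image1[OF assms(1)] by simp
qed

lemma homeomorphism_triod_end_endpoint:
  assumes "homeomorphism standard_triod T h k" "i < 3"
  shows "h (triod_end i) \<in> triod_endpoints T"
proof -
  have e: "triod_end i \<in> standard_triod" using triod_end_in_standard_triod[OF assms(2)] .
  then have "h (triod_end i) \<in> T" using homeomorphism_image1[OF assms(1)] by blast
  moreover have "connected (h ` (standard_triod - {triod_end i}))"
    using connected_standard_triod_minus_end[OF assms(2)]
    by (rule connected_continuous_image[OF continuous_on_subset[OF homeomorphism_cont1[OF assms(1)]], rotated])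
      auto
  ultimately show ?thesis
    unfolding triod_endpoints_def using homeomorphism_image_Diff[OF assms(1) e] by simp
qed

lemma homeomorphism_triod_endpoints_indices:
  assumes "homeomorphism standard_triod T h k" "triod_endpoints T = {a, b, c}"
  obtains i j l where "i < 3" "j < 3" "l < 3" "i \<noteq> j" "j \<noteq> l" "i \<noteq> l"
    "a = h (triod_end i)" "b = h (triod_end j)" "c = h (triod_end l)"
proof -
  let ?E = "(\<lambda>i. h (triod_end i)) ` {..<3}"
  have "inj_on (\<lambda>i. h (triod_end i)) {..<3}"
  proof (rule inj_onI)
    fix i j assume ij: "i \<in> {..<3}" "j \<in> {..<3}" "h (triod_end i) = h (triod_end j)"
    have "triod_end i = k (h (triod_end i))" "triod_end j = k (h (triod_end j))"
      using ij(1,2) by (simp_all add: homeomorphism_apply1[OF assms(1)] triod_end_in_standard_triod)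
    then show "i = j" using ij triod_end_inj by auto
  qed
  then have "card ?E = 3" by (simp add: card_image)
  moreover have "?E \<subseteq> {a, b, c}"
    using homeomorphism_triod_end_endpoint[OF assms(1)] assms(2) by blast
  moreover have "card {a, b, c} \<le> 3" by (auto simp: card_insert_if)
  ultimately have E: "?E = {a, b, c}" and "card {a, b, c} = 3"
    using card_seteq[of "{a, b, c}" ?E] by auto
  then have distinct: "a \<noteq> b" "b \<noteq> c" "a \<noteq> c" by (auto simp: card_insert_if split: if_splits)
  have mem: "a \<in> ?E" "b \<in> ?E" "c \<in> ?E" using E by blast+
  obtain i where "i < 3" "a = h (triod_end i)" using mem(1) by blast
  moreover obtain j where "j < 3" "b = h (triod_end j)" using mem(2) by blast
  moreover obtain l where "l < 3" "c = h (triod_end l)" using mem(3) by blast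
  ultimately show ?thesis using that distinct by blast
qed

lemma homeomorphism_triod_path_through_vertex:
  assumes "homeomorphism standard_triod T h k" "path g" "path_image g \<subseteq> T"
    and "pathstart g = h (triod_end i)" "pathfinish g = h (triod_end j)"
    and "i < 3" "j < 3" "i \<noteq> j" "0 < s" "s \<le> 1"
  obtains t1 t0 t2 where "0 \<le> t1" "t1 \<le> t0" "t0 \<le> t2" "t2 \<le> 1"
    "g t1 = h (s *\<^sub>R triod_end i)" "g t0 = h 0" "g t2 = h (s *\<^sub>R triod_end j)"
proof -
  have g_eq: "h (k (g t)) = g t" if "0 \<le> t" "t \<le> 1" for t
    using homeomorphism_apply2[OF assms(1)] assms(3) that unfolding path_image_def
    by (simp add: image_subset_iff)
  have "path (k \<circ> g)"
    using assms(2,3) unfolding path_def path_image_def o_def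
    by (rule continuous_on_compose2[OF homeomorphism_cont2[OF assms(1)]])
  moreover have "path_image (k \<circ> g) \<subseteq> standard_triod"
    using assms(3) homeomorphism_image2[OF assms(1)] by (auto simp: path_image_compose)
  moreover have "(k \<circ> g) 0 = triod_end i" "(k \<circ> g) 1 = triod_end j"
    using assms(4-7) homeomorphism_apply1[OF assms(1)] triod_end_in_standard_triod
    by (simp_all add: pathstart_def pathfinish_def)
  ultimately obtain t1 t0 t2 where t: "0 \<le> t1" "t1 \<le> t0" "t0 \<le> t2" "t2 \<le> 1"
    "(k \<circ> g) t1 = s *\<^sub>R triod_end i" "(k \<circ> g) t0 = 0" "(k \<circ> g) t2 = s *\<^sub>R triod_end j"
    by (rule standard_triod_path_through_vertex[OF _ _ _ _ assms(6-10)])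
  show ?thesis
  proof (rule that[OF t(1-4)])
    show "g t1 = h (s *\<^sub>R triod_end i)" "g t0 = h 0" "g t2 = h (s *\<^sub>R triod_end j)"
      using g_eq[of t1] g_eq[of t0] g_eq[of t2] t by auto
  qed
qed

lemma homeomorphism_triod_legs_near_vertex:
  assumes "homeomorphism standard_triod T h k" "T \<subseteq> P" "0 < r"
  obtains s where "0 < s" "s \<le> 1" "\<And>i. i < 3 \<Longrightarrow> h (s *\<^sub>R triod_end i) \<in> P \<inter> ball (h 0) r - {h 0}"
proof -
  have "\<forall>e>0. \<exists>\<delta>>0. \<forall>z\<in>standard_triod. dist z 0 < \<delta> \<longrightarrow> dist (h z) (h 0) < e"
    using homeomorphism_cont1[OF assms(1)] zero_in_standard_triod unfolding continuous_on_iff by blast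
  then obtain \<delta> where "\<delta> > 0"
    and \<delta>: "\<And>z. z \<in> standard_triod \<Longrightarrow> dist z 0 < \<delta> \<Longrightarrow> dist (h z) (h 0) < r"
    using assms(3) by blast
  define s where "s = min 1 (\<delta> / 2)"
  have s: "0 < s" "s \<le> 1" "s < \<delta>" using \<open>\<delta> > 0\<close> unfolding s_def by auto
  have "h (s *\<^sub>R triod_end i) \<in> P \<inter> ball (h 0) r - {h 0}" if "i < 3" for i
  proof -
    have leg: "s *\<^sub>R triod_end i \<in> standard_triod"
      using that s unfolding mem_standard_triod by (intro exI[of _ i] conjI bexI[of _ s]) auto
    then have "h (s *\<^sub>R triod_end i) \<in> P" using homeomorphism_image1[OF assms(1)] assms(2) by blast
    moreover have "dist (h (s *\<^sub>R triod_end i)) (h 0) < r" using \<delta>[OF leg] s by simp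
    moreover have "h (s *\<^sub>R triod_end i) \<noteq> h 0"
    proof
      assume "h (s *\<^sub>R triod_end i) = h 0"
      then have "k (h (s *\<^sub>R triod_end i)) = k (h 0)" by simp
      then have "s *\<^sub>R triod_end i = 0"
        using homeomorphism_apply1[OF assms(1) leg] homeomorphism_apply1[OF assms(1) zero_in_standard_triod]
        by simp
      then show False using s by simp
    qed
    ultimately show ?thesis by (simp add: dist_commute)
  qed
  then show ?thesis using that s(1,2) by blast
qed

lemma geodesic_in_triod_no_shortcut:
  assumes "pl_connected P" "homeomorphism standard_triod T h k"
    and "geodesic_in P g" "path_image g \<subseteq> T"
    and "pathstart g = h (triod_end i)" "pathfinish g = h (triod_end j)"
    and "i < 3" "j < 3" "i \<noteq> j" "0 < s" "s \<le> 1"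
  shows "\<not> shortcut P (h 0) (h (s *\<^sub>R triod_end i)) (h (s *\<^sub>R triod_end j))"
proof -
  have "path g" using assms(3) arc_imp_path unfolding geodesic_in_def by blast
  then obtain t1 t0 t2 where "0 \<le> t1" "t1 \<le> t0" "t0 \<le> t2" "t2 \<le> 1"
    "g t1 = h (s *\<^sub>R triod_end i)" "g t0 = h 0" "g t2 = h (s *\<^sub>R triod_end j)"
    using homeomorphism_triod_path_through_vertex[OF assms(2) _ assms(4-11)] by blast
  then show ?thesis using geodesic_no_shortcut[OF assms(1,3)] by metis
qed

theorem mainTheorem7:
  fixes P T :: "(real^2) set" and a b c x :: "real^2"
    and g_ab g_bc g_ac :: "real \<Rightarrow> real^2"
  assumes "pl_disk P"
    and "T \<subseteq> P" and "triod T"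
    and "triod_endpoints T = {a, b, c}"
    and "triod_vertex T x"
    and "arc g_ab" "path_image g_ab \<subseteq> T" "pathstart g_ab = a" "pathfinish g_ab = b"
    and "arc g_bc" "path_image g_bc \<subseteq> T" "pathstart g_bc = b" "pathfinish g_bc = c"
    and "arc g_ac" "path_image g_ac \<subseteq> T" "pathstart g_ac = a" "pathfinish g_ac = c"
  shows "\<not> geodesic_in P g_ab \<or> \<not> geodesic_in P g_bc \<or> \<not> geodesic_in P g_ac"
proof -
  obtain h k where hk: "homeomorphism standard_triod T h k"
    using assms(3) homeomorphic_sym unfolding triod_def homeomorphic_def by blast
  obtain i j l where ijl: "i < 3" "j < 3" "l < 3" "i \<noteq> j" "j \<noteq> l" "i \<noteq> l"
    and abc: "a = h (triod_end i)" "b = h (triod_end j)" "c = h (triod_end l)"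
    using homeomorphism_triod_endpoints_indices[OF hk assms(4)] .
  have "h 0 \<in> P" using homeomorphism_image1[OF hk] zero_in_standard_triod assms(2) by blast
  obtain r where "r > 0" and local: "\<And>u v w. u \<in> P \<inter> ball (h 0) r - {h 0} \<Longrightarrow>
      v \<in> P \<inter> ball (h 0) r - {h 0} \<Longrightarrow> w \<in> P \<inter> ball (h 0) r - {h 0} \<Longrightarrow>
      shortcut P (h 0) u v \<or> shortcut P (h 0) v w \<or> shortcut P (h 0) u w"
    using pl_disk_local_shortcut[OF assms(1) \<open>h 0 \<in> P\<close>] by blast
  obtain s where s: "0 < s" "s \<le> 1"
    and near: "\<And>i. i < 3 \<Longrightarrow> h (s *\<^sub>R triod_end i) \<in> P \<inter> ball (h 0) r - {h 0}"
    using homeomorphism_triod_legs_near_vertex[OF hk assms(2) \<open>r > 0\<close>] by blast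
  have "pl_connected P" using pl_disk_pl_connected[OF assms(1)] .
  note no_shortcut = geodesic_in_triod_no_shortcut[OF this hk _ _ _ _ _ _ _ s]
  show ?thesis
    using local[OF near[OF ijl(1)] near[OF ijl(2)] near[OF ijl(3)]]
      no_shortcut[of g_ab i j] no_shortcut[of g_bc j l] no_shortcut[of g_ac i l] ijl abc assms
    by blast
qed

end
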